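(* Let $d\ge 0$ be an integer and let $L:\mathbb{C}_{2d+2}[z,\overline{z}]\to\mathbb{C}$ be a real linear functional which is non-negative on hermitian squares, i.e. $L(|f(z)|^2)\ge 0$ for all $f\in\mathbb{C}_{d+1}[z]$. Assume moreover that multiplication by $z$ is well defined on the quotient space $A_d$, i.e. for $p\in\mathbb{C}_d[z]$, $L(|p|^2)=0$ implies $L(|zp|^2)=0$ (this holds for instance if $L(|p|^2)>0$ for every nonzero $p\in\mathbb{C}_d[z]$). Let $R=\|M_d\|$ be the operator norm of the compressed multiplier $M_d=\pi_d M_z|_{A_d}:A_d\to A_d$. Then there exist an integer $N\le (d+1)^2$, points $z_1,\dots,z_N\in\mathbb{C}$ with $|z_k|=R$ (i.e. $z_k=Re^{i\theta_k}$ with $\theta_k\in\mathbb{R}$), and weights $c_1,\dots,c_N>0$ such that $$L(h)=\sum_{k=1}^N c_k\, h(z_k,\overline{z_k})$$ for every harmonic polynomial $h\in\mathbb{C}_{d,d}[z,\overline{z}]$ (i.e. every $h$ of degree at most $d$ in $z$ and at most $d$ in $\overline z$ with $\partial_z\partial_{\overline z}h=0$; equivalently $h=p(z)+\overline{q(z)}$ with $p,q\in\mathbb{C}_d[z]$).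
   Context: Notation: $z=x+iy$ is the complex variable on $\mathbb{C}\cong\mathbb{R}^2$. For an integer $n\ge0$, $\mathbb{C}_n[z]$ is the space of complex polynomials in $z$ of degree $\le n$; $\mathbb{C}_n[z,\overline z]$ is the space of complex polynomials in $z,\overline z$ (equivalently in $x,y$) of total degree $\le n$; $\mathbb{C}_{k,\ell}[z,\overline z]$ is the space of polynomials of degree $\le k$ in $z$ and $\le \ell$ in $\overline z$. A linear functional $L$ on $\mathbb{C}_{2m}[z,\overline z]$ is called real if $L(\overline{p})=\overline{L(p)}$ for all $p$. Hilbert space setup: for $L$ as in the statement, $\langle p,q\rangle_L=L(p\overline q)$ is a positive semidefinite hermitian form on $\mathbb{C}_{d+1}[z]$, with null space $N=\{p\in\mathbb{C}_{d+1}[z]: L(|p|^2)=0\}$. For $k\le d+1$, $A_k=\mathbb{C}_k[z]/(\mathbb{C}_k[z]\cap N)$ is a finite-dimensional Hilbert space with the induced inner product, and $A_0\subseteq A_1\subseteq\dots\subseteq A_{d+1}$. $\pi_d$ denotes the orthogonal projection of $A_{d+1}$ onto $A_d$. $M_z:A_d\to A_{d+1}$ is the (assumed well-defined) map induced by $p\mapsto zp$, and $M_d=\pi_d M_z|_{A_d}$ is its compression, a linear endomorphism of $A_d$. *)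

theory Defs
  imports "HOL-Analysis.Analysis" "HOL-Computational_Algebra.Polynomial"
begin

text \<open>A polynomial in z and conj z is represented by its coefficient function:
  c j k is the coefficient of z^j * (conj z)^k.\<close>
type_synonym zpoly = "nat \<Rightarrow> nat \<Rightarrow> complex"

definition tot_deg_le :: "nat \<Rightarrow> zpoly set" where
  "tot_deg_le n = {c. \<forall>j k. n < j + k \<longrightarrow> c j k = 0}"

definition bideg_le :: "nat \<Rightarrow> nat \<Rightarrow> zpoly set" where
  "bideg_le k l = {c. \<forall>i j. (k < i \<or> l < j) \<longrightarrow> c i j = 0}"

definition zp_conj :: "zpoly \<Rightarrow> zpoly" where
  "zp_conj c = (\<lambda>j k. cnj (c k j))"

definition zp_eval :: "nat \<Rightarrow> zpoly \<Rightarrow> complex \<Rightarrow> complex" where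
  "zp_eval n c z = (\<Sum>j\<le>n. \<Sum>k\<le>n. c j k * z ^ j * cnj z ^ k)"

definition zp_dzdzbar :: "zpoly \<Rightarrow> zpoly" where
  "zp_dzdzbar c = (\<lambda>j k. of_nat (Suc j) * of_nat (Suc k) * c (Suc j) (Suc k))"

definition harmonic :: "zpoly \<Rightarrow> bool" where
  "harmonic c \<longleftrightarrow> zp_dzdzbar c = (\<lambda>_ _. 0)"

text \<open>The polynomial f(z) * conj (g(z)) for f, g in C[z].\<close>
definition herm :: "complex poly \<Rightarrow> complex poly \<Rightarrow> zpoly" where
  "herm f g = (\<lambda>j k. coeff f j * cnj (coeff g k))"

definition lin_functional_on :: "zpoly set \<Rightarrow> (zpoly \<Rightarrow> complex) \<Rightarrow> bool" where
  "lin_functional_on S L \<longleftrightarrow>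
     (\<forall>c\<in>S. \<forall>c'\<in>S. L (\<lambda>j k. c j k + c' j k) = L c + L c') \<and>
     (\<forall>a. \<forall>c\<in>S. L (\<lambda>j k. a * c j k) = a * L c)"

definition real_functional_on :: "zpoly set \<Rightarrow> (zpoly \<Rightarrow> complex) \<Rightarrow> bool" where
  "real_functional_on S L \<longleftrightarrow> (\<forall>c\<in>S. L (zp_conj c) = cnj (L c))"

definition Lnorm :: "(zpoly \<Rightarrow> complex) \<Rightarrow> complex poly \<Rightarrow> real" where
  "Lnorm L p = sqrt (Re (L (herm p p)))"

text \<open>q (in C_d[z]) represents pi_d [x] in A_d: x - q is orthogonal to C_d[z].\<close>
definition proj_rep :: "(zpoly \<Rightarrow> complex) \<Rightarrow> nat \<Rightarrow> complex poly \<Rightarrow> complex poly \<Rightarrow> bool" where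
  "proj_rep L d x q \<longleftrightarrow> degree q \<le> d \<and> (\<forall>r. degree r \<le> d \<longrightarrow> L (herm (x - q) r) = 0)"

definition Md_norm :: "(zpoly \<Rightarrow> complex) \<Rightarrow> nat \<Rightarrow> real" where
  "Md_norm L d = Sup {Lnorm L q | p q. degree p \<le> d \<and> Lnorm L p \<le> 1 \<and>
                          proj_rep L d ([:0, 1:] * p) q}"

end

theory Submission
  imports Defs "HOL-Computational_Algebra.Fundamental_Theorem_Algebra"
begin

text \<open>
  Put \<open>R = \<parallel>M\<^sub>d\<parallel>\<close>. If \<open>R = 0\<close> the moments \<open>L(z\<^sup>j)\<close>, \<open>j \<ge> 1\<close>, vanish. Otherwise \<open>M\<^sub>d / R\<close> is a
  contraction, and this makes the Toeplitz form of the rescaled moments \<open>L(z\<^sup>j) / R\<^sup>j\<close> on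
  \<open>\<complex>\<^sub>d[z]\<close> positive semidefinite. For that form multiplication by \<open>z\<close> is isometric from
  \<open>\<complex>\<^sub>d\<^sub>-\<^sub>1[z]\<close> into \<open>\<complex>\<^sub>d[z]\<close>; either a null monic polynomial of least degree or an isometric
  extension of the shift gives a monic \<open>p\<close> of degree \<open>\<le> d + 1\<close> such that multiplication by \<open>z\<close> is
  unitary on \<open>\<complex>[z]/(p)\<close>. Its eigenvalues, the roots of \<open>p\<close>, lie on the unit circle and its
  eigenvectors are orthogonal, which yields a quadrature for the moments with at most \<open>d + 1\<close>
  nodes on \<open>|z| = R\<close>. A harmonic polynomial in \<open>\<complex>\<^sub>d\<^sub>,\<^sub>d[z, cnj z]\<close> only involves \<open>z\<^sup>j\<close> and
  \<open>cnj z\<^sup>j\<close>, so the quadrature extends to it by reality of \<open>L\<close>.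
\<close>

abbreviation X :: "complex poly" where "X \<equiv> [:0, 1:]"

section \<open>Semi-inner products on polynomials\<close>

locale poly_semi_inner =
  fixes ip :: "complex poly \<Rightarrow> complex poly \<Rightarrow> complex"
  assumes ip_add: "ip (f + g) h = ip f h + ip g h"
    and ip_smult: "ip (smult a f) g = a * ip f g"
    and ip_commute_cnj: "ip g f = cnj (ip f g)"
    and ip_self_nonneg: "0 \<le> Re (ip f f)"
begin

lemma ip_zero_left [simp]: "ip 0 g = 0"
  using ip_smult[of 0 g g] by simp

lemma ip_zero_right [simp]: "ip g 0 = 0"
  using ip_commute_cnj[of 0 g] by simp

lemma ip_add_right: "ip h (f + g) = ip h f + ip h g"
  using ip_commute_cnj[of h "f + g"] ip_commute_cnj[of h f] ip_commute_cnj[of h g] ip_add[of f g h]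
  by simp

lemma ip_smult_right: "ip g (smult a f) = cnj a * ip g f"
  using ip_commute_cnj[of g "smult a f"] ip_commute_cnj[of g f] ip_smult[of a f g] by simp

lemma ip_diff: "ip (f - g) h = ip f h - ip g h"
  using ip_add[of f "- g" h] ip_smult[of "- 1" g h] by simp

lemma ip_diff_right: "ip h (f - g) = ip h f - ip h g"
  using ip_add_right[of h f "- g"] ip_smult_right[of h "- 1" g] by simp

lemma ip_sum: "ip (\<Sum>i\<in>A. F i) g = (\<Sum>i\<in>A. ip (F i) g)"
  by (induction A rule: infinite_finite_induct) (auto simp: ip_add)

lemma ip_sum_right: "ip g (\<Sum>i\<in>A. F i) = (\<Sum>i\<in>A. ip g (F i))"
  by (induction A rule: infinite_finite_induct) (auto simp: ip_add_right)

lemma ip_self_real: "ip f f = of_real (Re (ip f f))"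
  using ip_commute_cnj[of f f] by (simp add: complex_eq_iff)

lemma ip_null_left:
  assumes "ip x x = 0"
  shows "ip x y = 0"
proof -
  define a where "a = ip x y"
  have key: "0 \<le> Re (ip y y) - 2 * s * (cmod a)\<^sup>2" for s :: real
  proof -
    define b where "b = of_real s * cnj a"
    have sum: "cnj b * cnj a + b * a = of_real (2 * s * (cmod a)\<^sup>2)"
      by (simp add: b_def complex_eq_iff cmod_def power2_eq_square algebra_simps)
    have "0 \<le> Re (ip (y - smult b x) (y - smult b x))"
      by (rule ip_self_nonneg)
    also have "ip (y - smult b x) (y - smult b x) = ip y y - (cnj b * cnj a + b * a)"
      using ip_commute_cnj[of y x] assms
      by (simp add: ip_diff ip_diff_right ip_smult ip_smult_right a_def algebra_simps)
    finally show ?thesis by (simp add: sum)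
  qed
  show ?thesis
  proof (rule ccontr)
    assume "ip x y \<noteq> 0"
    hence pos: "(cmod a)\<^sup>2 > 0" using a_def by simp
    have "0 \<le> Re (ip y y) - 2 * ((Re (ip y y) + 1) / (2 * (cmod a)\<^sup>2)) * (cmod a)\<^sup>2"
      by (rule key)
    also have "\<dots> = -1" using pos by (simp add: field_simps)
    finally show False by simp
  qed
qed

lemma ip_null_right: "ip x x = 0 \<Longrightarrow> ip y x = 0"
  using ip_null_left[of x y] ip_commute_cnj[of y x] by simp

lemma ip_null_add: "ip u u = 0 \<Longrightarrow> ip v v = 0 \<Longrightarrow> ip (u + v) (u + v) = 0"
  using ip_null_left[of u v] ip_null_left[of v u] by (simp add: ip_add ip_add_right)

definition snorm :: "complex poly \<Rightarrow> real" where
  "snorm f = sqrt (Re (ip f f))"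

lemma snorm_nonneg: "0 \<le> snorm f"
  using ip_self_nonneg[of f] by (simp add: snorm_def)

lemma snorm_square: "(snorm f)\<^sup>2 = Re (ip f f)"
  using ip_self_nonneg[of f] by (simp add: snorm_def)

lemma snorm_eq_0_iff: "snorm x = 0 \<longleftrightarrow> ip x x = 0"
  using ip_self_real[of x] ip_self_nonneg[of x] by (auto simp: snorm_def)

lemma snorm_le_iff: "snorm x \<le> snorm y \<longleftrightarrow> Re (ip x x) \<le> Re (ip y y)"
  by (simp add: snorm_def)

lemma cauchy_schwarz: "(cmod (ip x y))\<^sup>2 \<le> Re (ip x x) * Re (ip y y)"
proof (cases "ip y y = 0")
  case True
  thus ?thesis using ip_null_right[of y x] ip_self_nonneg[of x] by simp
next
  case False
  define r where "r = Re (ip y y)"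
  have yy: "ip y y = of_real r" using ip_self_real[of y] r_def by simp
  hence "r \<noteq> 0" using False by auto
  hence rpos: "r > 0" using ip_self_nonneg[of y] unfolding r_def by linarith
  define a where "a = ip x y"
  define t where "t = a / of_real r"
  have "0 \<le> Re (ip (x - smult t y) (x - smult t y))" by (rule ip_self_nonneg)
  also have "ip (x - smult t y) (x - smult t y) = ip x x - cnj t * a - t * cnj a + t * cnj t * of_real r"
    using ip_commute_cnj[of y x]
    by (simp add: ip_diff ip_diff_right ip_smult ip_smult_right yy a_def algebra_simps)
  also have "\<dots> = ip x x - of_real ((cmod a)\<^sup>2 / r)"
    using rpos cmod_power2[of a]
    by (simp add: t_def complex_eq_iff field_simps power2_eq_square)
  finally have "(cmod a)\<^sup>2 / r \<le> Re (ip x x)" by simp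
  thus ?thesis using rpos by (simp add: a_def r_def field_simps)
qed

lemma snorm_triangle: "snorm (x + y) \<le> snorm x + snorm y"
proof -
  have "(cmod (ip x y))\<^sup>2 \<le> (snorm x * snorm y)\<^sup>2"
    using cauchy_schwarz[of x y] by (simp add: power_mult_distrib snorm_square)
  hence cs: "cmod (ip x y) \<le> snorm x * snorm y"
    using snorm_nonneg[of x] snorm_nonneg[of y] by (simp add: power2_le_iff_abs_le)
  have "(snorm (x + y))\<^sup>2 = Re (ip x x) + Re (ip y y) + 2 * Re (ip x y)"
    using ip_commute_cnj[of y x] by (simp add: snorm_square ip_add ip_add_right)
  also have "\<dots> \<le> (snorm x + snorm y)\<^sup>2"
    using cs complex_Re_le_cmod[of "ip x y"] by (simp add: snorm_square power2_sum)
  finally show ?thesis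
    using snorm_nonneg[of x] snorm_nonneg[of y] by (simp add: power2_le_iff_abs_le)
qed

lemma snorm_smult: "snorm (smult c x) = cmod c * snorm x"
proof -
  have "ip (smult c x) (smult c x) = of_real ((cmod c)\<^sup>2) * ip x x"
    using complex_norm_square[of c] by (simp add: ip_smult ip_smult_right mult.assoc)
  thus ?thesis by (simp add: snorm_def real_sqrt_mult)
qed

lemma snorm_add_orthogonal:
  assumes "ip w u = 0"
  shows "(snorm (w + u))\<^sup>2 = (snorm w)\<^sup>2 + (snorm u)\<^sup>2"
  using assms ip_commute_cnj[of u w] by (simp add: snorm_square ip_add ip_add_right)

lemma snorm_le_if_orthogonal_diff:
  assumes "ip (x - y) y = 0"
  shows "snorm y \<le> snorm x"
proof -
  have "ip y (x - y) = 0" using assms ip_commute_cnj[of "x - y" y] by simp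
  hence "(snorm x)\<^sup>2 = (snorm y)\<^sup>2 + (snorm (x - y))\<^sup>2"
    using snorm_add_orthogonal[of y "x - y"] by simp
  hence "(snorm y)\<^sup>2 \<le> (snorm x)\<^sup>2" by simp
  thus ?thesis
    using snorm_nonneg[of y] snorm_nonneg[of x] by (simp add: power2_le_iff_abs_le)
qed

end

section \<open>Spans of initial segments of a sequence of polynomials\<close>

definition span_upto :: "(nat \<Rightarrow> complex poly) \<Rightarrow> nat \<Rightarrow> complex poly set" where
  "span_upto b k = {y. \<exists>c. y = (\<Sum>i<k. smult (c i) (b i))}"

lemma span_upto_0: "span_upto b 0 = {0}"
  unfolding span_upto_def by simp

lemma span_upto_add:
  assumes "x \<in> span_upto b k" "y \<in> span_upto b k"
  shows "x + y \<in> span_upto b k"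
proof -
  obtain c c' where "x = (\<Sum>i<k. smult (c i) (b i))" "y = (\<Sum>i<k. smult (c' i) (b i))"
    using assms unfolding span_upto_def by auto
  hence "x + y = (\<Sum>i<k. smult (c i + c' i) (b i))"
    by (simp add: sum.distrib smult_add_left)
  thus ?thesis unfolding span_upto_def by (intro CollectI exI[of _ "\<lambda>i. c i + c' i"])
qed

lemma span_upto_smult:
  assumes "x \<in> span_upto b k"
  shows "smult a x \<in> span_upto b k"
proof -
  obtain c where x: "x = (\<Sum>i<k. smult (c i) (b i))"
    using assms unfolding span_upto_def by auto
  have "smult a x = (\<Sum>i<k. smult (a * c i) (b i))"
    unfolding x by (induction k) (simp_all add: smult_add_right)
  thus ?thesis unfolding span_upto_def by (intro CollectI exI[of _ "\<lambda>i. a * c i"])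
qed

lemma span_upto_diff: "x \<in> span_upto b k \<Longrightarrow> y \<in> span_upto b k \<Longrightarrow> x - y \<in> span_upto b k"
  using span_upto_add[of x b k "smult (- 1) y"] span_upto_smult[of y b k "- 1"] by simp

lemma span_upto_Suc_mono:
  assumes "x \<in> span_upto b k"
  shows "x \<in> span_upto b (Suc k)"
proof -
  obtain c where "x = (\<Sum>i<k. smult (c i) (b i))"
    using assms unfolding span_upto_def by auto
  hence "x = (\<Sum>i<Suc k. smult (if i < k then c i else 0) (b i))"
    by simp
  thus ?thesis unfolding span_upto_def by (intro CollectI exI[of _ "\<lambda>i. if i < k then c i else 0"])
qed

lemma generator_in_span_upto: "b k \<in> span_upto b (Suc k)"
  unfolding span_upto_def
  by (auto intro!: exI[where x="\<lambda>i. if i = k then 1 else 0"]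
           simp: if_distrib sum.If_cases cong: if_cong)

lemma span_upto_SucE:
  assumes "y \<in> span_upto b (Suc k)"
  obtains y' a where "y' \<in> span_upto b k" "y = y' + smult a (b k)"
  using assms unfolding span_upto_def by auto

lemma in_span_upto_monom_iff:
  "y \<in> span_upto (monom 1) k \<longleftrightarrow> (\<forall>i\<ge>k. coeff y i = 0)"
proof
  show "y \<in> span_upto (monom 1) k \<Longrightarrow> \<forall>i\<ge>k. coeff y i = 0"
    unfolding span_upto_def by (auto simp: coeff_sum)
next
  assume "\<forall>i\<ge>k. coeff y i = 0"
  have "coeff (\<Sum>i<k. smult (coeff y i) (monom 1 i)) j = (\<Sum>i<k. if i = j then coeff y i else 0)"
    for j by (simp add: coeff_sum if_distrib cong: if_cong)
  hence "coeff y j = coeff (\<Sum>i<k. smult (coeff y i) (monom 1 i)) j" for j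
    using \<open>\<forall>i\<ge>k. coeff y i = 0\<close> by (cases "j < k") (simp_all add: sum.delta')
  hence "y = (\<Sum>i<k. smult (coeff y i) (monom 1 i))"
    by (rule poly_eqI)
  thus "y \<in> span_upto (monom 1) k"
    unfolding span_upto_def by (intro CollectI exI[of _ "coeff y"])
qed

lemma in_span_upto_monom_iff_degree:
  "y \<in> span_upto (monom 1) k \<longleftrightarrow> y = 0 \<or> degree y < k"
  unfolding in_span_upto_monom_iff
  by (metis coeff_0 coeff_eq_0 leading_coeff_0_iff linorder_not_le order.strict_trans2)

lemma in_span_upto_shifted_monom_iff:
  "y \<in> span_upto (\<lambda>i. monom 1 (Suc i)) k \<longleftrightarrow> (\<exists>g\<in>span_upto (monom 1) k. y = X * g)"
proof -
  have "(\<Sum>i<k. smult (c i) (monom 1 (Suc i))) = X * (\<Sum>i<k. smult (c i) (monom 1 i))" for c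
    by (simp add: sum_distrib_left monom_Suc)
  thus ?thesis unfolding span_upto_def by (auto simp del: mult_pCons_left)
qed

context poly_semi_inner
begin

lemma orthogonal_span_upto_Suc:
  assumes "\<forall>g\<in>span_upto b k. ip z g = 0" "ip z (b k) = 0" "g \<in> span_upto b (Suc k)"
  shows "ip z g = 0"
  using assms(3) by (rule span_upto_SucE) (use assms(1,2) in \<open>simp add: ip_add_right ip_smult_right\<close>)

lemma exists_orthogonal_projection:
  "\<exists>y\<in>span_upto b k. \<forall>g\<in>span_upto b k. ip (x - y) g = 0"
proof (induction k arbitrary: x)
  case 0
  show ?case by (simp add: span_upto_0)
next
  case (Suc k)
  obtain y where y: "y \<in> span_upto b k" "\<forall>g\<in>span_upto b k. ip (x - y) g = 0"
    using Suc by blast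
  obtain yb where yb: "yb \<in> span_upto b k" "\<forall>g\<in>span_upto b k. ip (b k - yb) g = 0"
    using Suc by blast
  define u where "u = b k - yb"
  have u: "u \<in> span_upto b (Suc k)"
    unfolding u_def by (intro span_upto_diff generator_in_span_upto span_upto_Suc_mono yb(1))
  have bk: "b k = u + yb" unfolding u_def by simp
  show ?case
  proof (cases "ip u u = 0")
    case True
    have "ip (x - y) (b k) = 0"
      unfolding bk using ip_null_right[OF True] y yb by (simp add: ip_add_right)
    thus ?thesis using span_upto_Suc_mono[OF y(1)] orthogonal_span_upto_Suc[OF y(2)] by blast
  next
    case False
    define y' where "y' = y + smult (ip (x - y) u / ip u u) u"
    have y': "y' \<in> span_upto b (Suc k)"
      unfolding y'_def by (intro span_upto_add span_upto_Suc_mono[OF y(1)] span_upto_smult u)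
    have orth: "\<forall>g\<in>span_upto b k. ip (x - y') g = 0"
      using y(2) yb(2) by (simp add: y'_def u_def ip_diff ip_add ip_smult algebra_simps)
    have "ip (x - y') u = ip (x - y) u - (ip (x - y) u / ip u u) * ip u u"
      by (simp add: y'_def ip_diff ip_add ip_smult algebra_simps)
    hence "ip (x - y') u = 0"
      using False by simp
    hence "ip (x - y') (b k) = 0"
      unfolding bk using orth yb(1) by (simp add: ip_add_right)
    thus ?thesis using y' orthogonal_span_upto_Suc[OF orth] by blast
  qed
qed

lemma snorm_linear_bound_orthogonal_sum:
  assumes F_add: "\<And>x y. F (x + y) = F x + F y"
    and F_smult: "\<And>a x. F (smult a x) = smult a (F x)"
    and w: "snorm (F w) \<le> C * snorm w" "C \<ge> 0"
    and u: "snorm (F u) = D * snorm u" "D \<ge> 0"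
    and orth: "ip u w = 0"
  shows "snorm (F (w + smult a u)) \<le> (C + D) * snorm (w + smult a u)"
proof -
  define y where "y = w + smult a u"
  have wu: "ip w (smult a u) = 0" using orth ip_commute_cnj[of u w] by (simp add: ip_smult_right)
  have nw: "snorm w \<le> snorm y"
    using orth by (intro snorm_le_if_orthogonal_diff) (simp add: y_def ip_smult)
  have nu: "cmod a * snorm u \<le> snorm y"
    unfolding snorm_smult[symmetric] using wu
    by (intro snorm_le_if_orthogonal_diff) (simp add: y_def)
  have "snorm (F y) \<le> snorm (F w) + snorm (F (smult a u))"
    unfolding y_def F_add by (rule snorm_triangle)
  also have "\<dots> = snorm (F w) + D * (cmod a * snorm u)"
    by (simp add: F_smult snorm_smult u(1))
  also have "\<dots> \<le> C * snorm y + D * snorm y"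
    using order.trans[OF w(1) mult_left_mono[OF nw w(2)]] mult_left_mono[OF nu u(2)]
    by (intro add_mono)
  finally show ?thesis unfolding y_def by (simp add: algebra_simps)
qed

lemma bounded_on_span_upto:
  assumes F_add: "\<And>x y. F (x + y) = F x + F y"
    and F_smult: "\<And>a x. F (smult a x) = smult a (F x)"
    and F_null: "\<And>x. x \<in> span_upto b k \<Longrightarrow> ip x x = 0 \<Longrightarrow> ip (F x) (F x) = 0"
  shows "\<exists>C\<ge>0. \<forall>y\<in>span_upto b k. snorm (F y) \<le> C * snorm y"
  using F_null
proof (induction k)
  case 0
  have "F 0 = 0" using F_smult[of 0 0] by simp
  thus ?case by (intro exI[of _ 0]) (simp add: span_upto_0 snorm_def)
next
  case (Suc k)
  have "\<And>x. x \<in> span_upto b k \<Longrightarrow> ip x x = 0 \<Longrightarrow> ip (F x) (F x) = 0"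
    using Suc.prems span_upto_Suc_mono by blast
  then obtain C where C: "C \<ge> 0" "\<forall>y\<in>span_upto b k. snorm (F y) \<le> C * snorm y"
    using Suc.IH by blast
  obtain yb where yb: "yb \<in> span_upto b k" "\<forall>g\<in>span_upto b k. ip (b k - yb) g = 0"
    using exists_orthogonal_projection by blast
  define u where "u = b k - yb"
  have u: "u \<in> span_upto b (Suc k)"
    unfolding u_def by (intro span_upto_diff generator_in_span_upto span_upto_Suc_mono yb(1))
  define D where "D = (if snorm u = 0 then 0 else snorm (F u) / snorm u)"
  have D: "D \<ge> 0" "snorm (F u) = D * snorm u"
    using Suc.prems[OF u] snorm_nonneg[of u] snorm_nonneg[of "F u"]
    unfolding D_def snorm_eq_0_iff[symmetric] by auto
  have "snorm (F y) \<le> (C + D) * snorm y" if "y \<in> span_upto b (Suc k)" for y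
    using that
  proof (rule span_upto_SucE)
    fix y' a assume y': "y' \<in> span_upto b k" "y = y' + smult a (b k)"
    define w where "w = y' + smult a yb"
    have w: "w \<in> span_upto b k" unfolding w_def by (intro span_upto_add y'(1) span_upto_smult yb(1))
    have "y = w + smult a u" unfolding w_def u_def y'(2) by (simp add: smult_diff_right)
    moreover have "ip u w = 0" using yb(2) w by (simp add: u_def)
    ultimately show ?thesis
      using snorm_linear_bound_orthogonal_sum[OF F_add F_smult _ C(1) D(2,1)] C(2) w by simp
  qed
  thus ?case using C(1) D(1) by (intro exI[of _ "C + D"]) auto
qed

end

section \<open>Lagrange interpolation\<close>

definition nodal_poly :: "(nat \<Rightarrow> 'a::field) \<Rightarrow> nat \<Rightarrow> 'a poly" where
  "nodal_poly l m = (\<Prod>i<m. [:- l i, 1:])"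

definition lagrange_factor :: "(nat \<Rightarrow> 'a::field) \<Rightarrow> nat \<Rightarrow> nat \<Rightarrow> 'a poly" where
  "lagrange_factor l m k = (\<Prod>i\<in>{..<m} - {k}. [:- l i, 1:])"

lemma degree_nodal_poly: "degree (nodal_poly l m) = m"
  unfolding nodal_poly_def by (subst degree_prod_sum_eq) auto

lemma nodal_poly_nonzero: "nodal_poly l m \<noteq> 0"
  unfolding nodal_poly_def by (simp add: prod_zero_iff)

lemma lagrange_factor_nonzero: "lagrange_factor l m k \<noteq> 0"
  unfolding lagrange_factor_def by (simp add: prod_zero_iff)

lemma degree_lagrange_factor: "k < m \<Longrightarrow> degree (lagrange_factor l m k) = m - 1"
  unfolding lagrange_factor_def by (subst degree_prod_sum_eq) auto

lemma nodal_poly_eq_lagrange_factor: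
  "k < m \<Longrightarrow> nodal_poly l m = [:- l k, 1:] * lagrange_factor l m k"
  unfolding nodal_poly_def lagrange_factor_def by (subst prod.remove[of _ k]) auto

lemma poly_nodal_poly_node: "k < m \<Longrightarrow> poly (nodal_poly l m) (l k) = 0"
  by (simp add: nodal_poly_eq_lagrange_factor)

lemma poly_lagrange_factor_other_node:
  "k < m \<Longrightarrow> k' < m \<Longrightarrow> k \<noteq> k' \<Longrightarrow> poly (lagrange_factor l m k) (l k') = 0"
  unfolding lagrange_factor_def poly_prod by (intro prod_zero) auto

lemma poly_lagrange_factor_own_node:
  "inj_on l {..<m} \<Longrightarrow> k < m \<Longrightarrow> poly (lagrange_factor l m k) (l k) \<noteq> 0"
  unfolding lagrange_factor_def poly_prod by (auto simp: prod_zero_iff inj_on_def)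

lemma lagrange_interpolation:
  fixes x :: "'a::field poly"
  assumes inj: "inj_on l {..<m}" and dx: "degree x < m"
  shows "x = (\<Sum>k<m. smult (poly x (l k) / poly (lagrange_factor l m k) (l k)) (lagrange_factor l m k))"
    (is "x = ?S")
proof (rule ccontr)
  assume "x \<noteq> ?S"
  hence D: "x - ?S \<noteq> 0" by simp
  have "degree ?S \<le> m - 1"
    by (intro degree_sum_le order.trans[OF degree_smult_le]) (simp_all add: degree_lagrange_factor)
  hence deg: "degree (x - ?S) < m"
    using dx degree_diff_le_max[of x ?S] by linarith
  have "poly ?S (l k') = poly x (l k')" if "k' < m" for k'
  proof -
    have "poly ?S (l k') = (\<Sum>k<m. if k = k' then poly x (l k) else 0)"
      unfolding poly_sum using that
      by (intro sum.cong refl)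
         (auto simp: poly_lagrange_factor_other_node poly_lagrange_factor_own_node[OF inj])
    thus ?thesis using that by simp
  qed
  hence "l ` {..<m} \<subseteq> {z. poly (x - ?S) z = 0}" by auto
  hence "card (l ` {..<m}) \<le> card {z. poly (x - ?S) z = 0}"
    by (rule card_mono[OF poly_roots_finite[OF D]])
  hence "m \<le> card {z. poly (x - ?S) z = 0}"
    by (simp add: card_image[OF inj])
  also have "\<dots> \<le> degree (x - ?S)" by (rule card_poly_roots_bound[OF D])
  finally show False using deg by simp
qed

section \<open>Quadrature from a unitary shift on a quotient \<open>\<complex>[z]/(p)\<close>\<close>

lemma mod_eq_of_degree_less: "degree r < degree (p::'a::field poly) \<Longrightarrow> (p * q + r) mod p = r"
  by (metis add.commute mod_mult_self1 mod_poly_less mult.commute)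

context poly_semi_inner
begin

context
  fixes l :: "nat \<Rightarrow> complex" and m :: nat
  assumes definite: "\<And>f. f \<noteq> 0 \<Longrightarrow> degree f < m \<Longrightarrow> ip f f \<noteq> 0"
    and shift_unitary: "\<And>f g. degree f < m \<Longrightarrow> degree g < m \<Longrightarrow>
          ip ((X * f) mod nodal_poly l m) ((X * g) mod nodal_poly l m) = ip f g"
begin

text \<open>The Lagrange factors \<open>E\<^sub>k\<close> are eigenvectors of the unitary shift, with eigenvalues the nodes
  \<open>l k\<close>. Hence the nodes are unimodular and distinct and the \<open>E\<^sub>k\<close> are orthogonal, so expanding
  \<open>z\<^sup>j mod p\<close> and \<open>1\<close> in the \<open>E\<^sub>k\<close> turns \<open>\<langle>z\<^sup>j mod p, 1\<rangle>\<close> into a quadrature over the nodes.\<close>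

lemma shift_lagrange_factor:
  assumes "k < m"
  shows "(X * lagrange_factor l m k) mod nodal_poly l m = smult (l k) (lagrange_factor l m k)"
proof -
  have "X * lagrange_factor l m k = nodal_poly l m * 1 + smult (l k) (lagrange_factor l m k)"
    using nodal_poly_eq_lagrange_factor[of k m l] assms by (simp add: algebra_simps)
  moreover have "degree (smult (l k) (lagrange_factor l m k)) < degree (nodal_poly l m)"
    using assms degree_smult_le[of "l k" "lagrange_factor l m k"]
    by (simp add: degree_nodal_poly degree_lagrange_factor)
  ultimately show ?thesis by (metis mod_eq_of_degree_less)
qed

lemma ip_lagrange_factor_self_nonzero:
  "k < m \<Longrightarrow> ip (lagrange_factor l m k) (lagrange_factor l m k) \<noteq> 0"
  by (intro definite lagrange_factor_nonzero) (simp add: degree_lagrange_factor)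

lemma ip_shifted_lagrange_factors:
  assumes "k < m" "k' < m"
  shows "l k * cnj (l k') * ip (lagrange_factor l m k) (lagrange_factor l m k')
         = ip (lagrange_factor l m k) (lagrange_factor l m k')"
proof -
  have "ip ((X * lagrange_factor l m k) mod nodal_poly l m) ((X * lagrange_factor l m k') mod nodal_poly l m)
        = ip (lagrange_factor l m k) (lagrange_factor l m k')"
    using assms by (intro shift_unitary) (simp_all add: degree_lagrange_factor)
  thus ?thesis
    unfolding shift_lagrange_factor[OF assms(1)] shift_lagrange_factor[OF assms(2)]
    by (simp add: ip_smult ip_smult_right ac_simps)
qed

lemma node_times_cnj: "k < m \<Longrightarrow> l k * cnj (l k) = 1"
  using ip_shifted_lagrange_factors[of k k] ip_lagrange_factor_self_nonzero[of k] by simp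

lemma norm_node:
  assumes "k < m"
  shows "cmod (l k) = 1"
proof -
  have "(cmod (l k))\<^sup>2 = 1"
    using node_times_cnj[OF assms] complex_norm_square[of "l k"] by (metis of_real_eq_1_iff)
  hence "cmod (l k) = 1 \<or> cmod (l k) = - 1" by (simp add: power2_eq_1_iff)
  thus ?thesis using norm_ge_zero[of "l k"] by linarith
qed

text \<open>A repeated node \<open>l i = l j\<close> would make \<open>E\<^sub>i = (z - l i) F\<close> with \<open>\<langle>zF, zE\<^sub>i\<rangle> = \<langle>F, E\<^sub>i\<rangle>\<close>,
  forcing \<open>\<langle>E\<^sub>i, E\<^sub>i\<rangle> = 0\<close>.\<close>

lemma nodes_distinct: "inj_on l {..<m}"
proof (rule inj_onI, rule ccontr)
  fix i j assume "i \<in> {..<m}" "j \<in> {..<m}" and ij: "l i = l j" "i \<noteq> j"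
  hence i: "i < m" and j: "j < m" by auto
  define E where "E = lagrange_factor l m i"
  define F where "F = (\<Prod>t\<in>{..<m} - {i} - {j}. [:- l t, 1:])"
  have EF: "E = [:- l i, 1:] * F"
    unfolding E_def lagrange_factor_def F_def using ij j by (subst prod.remove[of _ j]) auto
  have degF: "degree F = m - 2"
    unfolding F_def using ij i j by (subst degree_prod_sum_eq) (auto simp: card_Diff_singleton_if)
  have m2: "m \<ge> 2" using ij i j by auto
  have XF: "X * F = E + smult (l i) F" unfolding EF by (simp add: algebra_simps)
  have "degree (X * F) < degree (nodal_poly l m)"
    using degree_mult_le[of X F] degF m2 by (simp add: degree_nodal_poly)
  hence XF_mod: "(X * F) mod nodal_poly l m = X * F" by (rule mod_poly_less)
  have XE_mod: "(X * E) mod nodal_poly l m = smult (l i) E"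
    unfolding E_def by (rule shift_lagrange_factor[OF i])
  have "ip ((X * F) mod nodal_poly l m) ((X * E) mod nodal_poly l m) = ip F E"
    using degF m2 i by (intro shift_unitary) (simp_all add: E_def degree_lagrange_factor)
  hence "ip (X * F) (smult (l i) E) = ip F E"
    unfolding XF_mod XE_mod .
  hence "ip (E + smult (l i) F) (smult (l i) E) = ip F E"
    unfolding XF .
  hence "cnj (l i) * ip E E + (l i * cnj (l i)) * ip F E = ip F E"
    by (simp add: ip_add ip_smult ip_smult_right algebra_simps)
  hence "cnj (l i) * ip E E = 0" using node_times_cnj[OF i] by simp
  moreover have "cnj (l i) \<noteq> 0" using norm_node[OF i] by auto
  ultimately show False using ip_lagrange_factor_self_nonzero[OF i] by (simp add: E_def)
qed

lemma lagrange_factors_orthogonal: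
  assumes "k < m" "k' < m" "k \<noteq> k'"
  shows "ip (lagrange_factor l m k) (lagrange_factor l m k') = 0"
proof (rule ccontr)
  assume "ip (lagrange_factor l m k) (lagrange_factor l m k') \<noteq> 0"
  hence "l k * cnj (l k') = 1" using ip_shifted_lagrange_factors[OF assms(1,2)] by simp
  hence "l k * (cnj (l k') * l k') = l k'" by (simp add: mult.assoc[symmetric])
  hence "l k = l k'" using node_times_cnj[OF assms(2)] by (simp add: mult.commute)
  thus False using nodes_distinct assms by (auto dest: inj_onD)
qed

definition node_weight :: "nat \<Rightarrow> real" where
  "node_weight k = Re (ip (lagrange_factor l m k) (lagrange_factor l m k))
                     / (cmod (poly (lagrange_factor l m k) (l k)))\<^sup>2"

lemma node_weight_pos:
  assumes k: "k < m"
  shows "node_weight k > 0"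
proof -
  define E where "E = lagrange_factor l m k"
  have "Re (ip E E) \<noteq> 0"
    using ip_lagrange_factor_self_nonzero[OF k] ip_self_real[of E] by (metis E_def of_real_0)
  hence "Re (ip E E) > 0" using ip_self_nonneg[of E] by linarith
  thus ?thesis
    using poly_lagrange_factor_own_node[OF nodes_distinct k] by (simp add: node_weight_def E_def)
qed

lemma ip_eq_node_sum:
  assumes "degree x < m" "degree y < m"
  shows "ip x y = (\<Sum>k<m. of_real (node_weight k) * poly x (l k) * cnj (poly y (l k)))"
proof -
  define E where "E = lagrange_factor l m"
  define e where "e k = poly (E k) (l k)" for k
  have e: "e k \<noteq> 0" if "k < m" for k
    using poly_lagrange_factor_own_node[OF nodes_distinct that] by (simp add: e_def E_def)
  have expand: "z = (\<Sum>k<m. smult (poly z (l k) / e k) (E k))" if "degree z < m" for z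
    using lagrange_interpolation[OF nodes_distinct that] by (simp add: e_def E_def)
  have "ip x y = ip (\<Sum>k<m. smult (poly x (l k) / e k) (E k)) (\<Sum>k<m. smult (poly y (l k) / e k) (E k))"
    by (rule arg_cong2[where f = ip, OF expand[OF assms(1)] expand[OF assms(2)]])
  also have "\<dots> = (\<Sum>k<m. \<Sum>k'<m. (poly x (l k) / e k) * cnj (poly y (l k') / e k') * ip (E k) (E k'))"
    by (simp add: ip_sum ip_sum_right ip_smult ip_smult_right sum_distrib_left mult.assoc)
      (subst sum.swap, simp add: ac_simps)
  also have "\<dots> = (\<Sum>k<m. (poly x (l k) / e k) * cnj (poly y (l k) / e k) * ip (E k) (E k))"
  proof (intro sum.cong refl)
    fix k assume k: "k \<in> {..<m}"
    have "(\<Sum>k'<m. (poly x (l k) / e k) * cnj (poly y (l k') / e k') * ip (E k) (E k'))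
        = (\<Sum>k'<m. if k' = k then (poly x (l k) / e k) * cnj (poly y (l k) / e k) * ip (E k) (E k) else 0)"
      using lagrange_factors_orthogonal k by (intro sum.cong refl) (auto simp: E_def)
    thus "(\<Sum>k'<m. (poly x (l k) / e k) * cnj (poly y (l k') / e k') * ip (E k) (E k'))
        = (poly x (l k) / e k) * cnj (poly y (l k) / e k) * ip (E k) (E k)"
      using k by simp
  qed
  also have "\<dots> = (\<Sum>k<m. of_real (node_weight k) * poly x (l k) * cnj (poly y (l k)))"
  proof (intro sum.cong refl)
    fix k assume "k \<in> {..<m}"
    hence "e k * cnj (e k) \<noteq> 0" using e by simp
    moreover have "e k * cnj (e k) = of_real ((cmod (e k))\<^sup>2)"
      using complex_norm_square[of "e k"] by simp
    ultimately show "(poly x (l k) / e k) * cnj (poly y (l k) / e k) * ip (E k) (E k)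
        = of_real (node_weight k) * poly x (l k) * cnj (poly y (l k))"
      using ip_self_real[of "E k"]
      by (simp add: node_weight_def E_def e_def complex_cnj_divide field_simps)
  qed
  finally show ?thesis .
qed

lemma moments_mod_nodal_poly:
  "ip (monom 1 j mod nodal_poly l m) 1 = (\<Sum>k<m. of_real (node_weight k) * l k ^ j)"
proof (cases "m = 0")
  case True
  thus ?thesis by (simp add: nodal_poly_def)
next
  case False
  define Y where "Y = monom 1 j mod nodal_poly l m"
  have "degree Y < m"
    using degree_mod_less[OF nodal_poly_nonzero, of "monom 1 j" l m] False
    by (auto simp: Y_def degree_nodal_poly)
  moreover have "poly Y (l k) = l k ^ j" if k: "k < m" for k
  proof -
    have "monom 1 j = monom 1 j div nodal_poly l m * nodal_poly l m + Y"
      unfolding Y_def by (rule div_mult_mod_eq[symmetric])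
    hence "poly (monom 1 j) (l k) = poly Y (l k)"
      using poly_nodal_poly_node[OF k] by (metis add_0 mult_zero_right poly_add poly_mult)
    thus ?thesis by (simp add: poly_monom)
  qed
  ultimately show ?thesis
    using ip_eq_node_sum[of Y 1] False unfolding Y_def[symmetric] by simp
qed

end

definition circle_quadrature :: "nat \<Rightarrow> bool" where
  "circle_quadrature n \<longleftrightarrow> (\<exists>N l c. N \<le> n + 1 \<and> (\<forall>k<N. cmod (l k) = 1 \<and> (c k :: real) > 0) \<and>
     (\<forall>j\<le>n. ip (monom 1 j) 1 = (\<Sum>k<N. of_real (c k) * l k ^ j)))"

lemma circle_quadrature_of_unitary_quotient:
  assumes monic: "lead_coeff p = 1" and deg: "degree p \<le> n + 1"
    and definite: "\<And>f. f \<noteq> 0 \<Longrightarrow> degree f < degree p \<Longrightarrow> ip f f \<noteq> 0"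
    and unitary: "\<And>f g. degree f < degree p \<Longrightarrow> degree g < degree p \<Longrightarrow>
            ip ((X * f) mod p) ((X * g) mod p) = ip f g"
    and moments: "\<And>j. j \<le> n \<Longrightarrow> ip (monom 1 j) 1 = ip (monom 1 j mod p) 1"
  shows "circle_quadrature n"
proof -
  define m where "m = degree p"
  obtain l where "smult (lead_coeff p) (\<Prod>i<degree p. [:- l i, 1:]) = p"
    by (rule complex_poly_decompose')
  hence p: "p = nodal_poly l m"
    using monic by (simp add: nodal_poly_def m_def)
  have definite': "\<And>f. f \<noteq> 0 \<Longrightarrow> degree f < m \<Longrightarrow> ip f f \<noteq> 0"
    unfolding m_def by (rule definite)
  have unitary': "\<And>f g. degree f < m \<Longrightarrow> degree g < m \<Longrightarrow>
      ip ((X * f) mod nodal_poly l m) ((X * g) mod nodal_poly l m) = ip f g"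
    unfolding p[symmetric] unfolding m_def by (rule unitary)
  define c where "c = node_weight l m"
  have "\<forall>k<m. cmod (l k) = 1 \<and> c k > 0"
    using norm_node[OF definite' unitary'] node_weight_pos[OF definite' unitary'] by (simp add: c_def)
  moreover have "ip (monom 1 j) 1 = (\<Sum>k<m. of_real (c k) * l k ^ j)" if "j \<le> n" for j
    using moments[OF that] moments_mod_nodal_poly[OF definite' unitary'] by (simp add: c_def p[symmetric])
  ultimately show ?thesis
    unfolding circle_quadrature_def using deg m_def
    by (intro exI[of _ m] exI[of _ l] exI[of _ c]) auto
qed

end

section \<open>Quadrature for a form on which the shift is isometric\<close>

lemma mod_monic_shift:
  assumes monic: "lead_coeff p = 1" and deg: "degree f < degree p"
  shows "(X * f) mod p = X * f - smult (coeff (X * f) (degree p)) p"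
proof -
  define c where "c = coeff (X * f) (degree p)"
  define r where "r = X * f - smult c p"
  have "degree (X * f) \<le> degree p"
    using deg degree_mult_le[of X f] by simp
  hence "degree r \<le> degree p"
    unfolding r_def using degree_smult_le[of c p] by (intro degree_diff_le) auto
  moreover have "coeff r (degree p) = 0"
    unfolding r_def c_def using monic by simp
  ultimately have "degree r < degree p"
    using deg by (cases "r = 0") (auto simp: le_less dest: leading_coeff_neq_0)
  moreover have "X * f = p * [:c:] + r" unfolding r_def by simp
  ultimately show ?thesis unfolding r_def c_def by (metis mod_eq_of_degree_less)
qed

lemma degree_monom_minus: "degree (r :: complex poly) \<le> n \<Longrightarrow> degree (monom 1 (Suc n) - r) = Suc n"
  using degree_add_eq_left[of "- r" "monom 1 (Suc n)"] by (simp add: degree_monom_eq)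

lemma mod_shift_monom_minus:
  assumes r: "degree r \<le> n" and h: "degree h \<le> n"
  shows "(X * h) mod (monom 1 (Suc n) - r)
         = X * (h - smult (coeff h n) (monom 1 n)) + smult (coeff h n) r"
proof -
  define c where "c = coeff h n"
  define h' where "h' = h - smult c (monom 1 n)"
  have "coeff h' i = 0" if "i \<ge> n" for i
    using h that by (cases "i = n") (auto simp: h'_def c_def coeff_eq_0)
  hence "h' = 0 \<or> degree h' < n"
    using in_span_upto_monom_iff_degree[of h' n] in_span_upto_monom_iff[of h' n] by blast
  hence "degree (X * h') \<le> n"
    using degree_mult_le[of X h'] by auto
  hence "degree (X * h' + smult c r) < degree (monom 1 (Suc n) - r)"
    unfolding degree_monom_minus[OF r] using r degree_smult_le[of c r]
    by (intro le_imp_less_Suc degree_add_le) auto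
  moreover have "X * h = (monom 1 (Suc n) - r) * [:c:] + (X * h' + smult c r)"
    by (simp add: h'_def algebra_simps monom_Suc)
  ultimately show ?thesis unfolding h'_def c_def by (metis mod_eq_of_degree_less)
qed

locale shift_isometric = poly_semi_inner +
  fixes n :: nat
  assumes shift_isometric: "degree f < n \<Longrightarrow> degree g < n \<Longrightarrow> ip (X * f) (X * g) = ip f g"
begin

lemma shift_isometric_span:
  "f \<in> span_upto (monom 1) n \<Longrightarrow> g \<in> span_upto (monom 1) n \<Longrightarrow> ip (X * f) (X * g) = ip f g"
  unfolding in_span_upto_monom_iff_degree using shift_isometric by auto

lemma ip_null_mult:
  assumes p: "ip p p = 0"
  shows "degree (p * h) \<le> n \<Longrightarrow> ip (p * h) (p * h) = 0"
proof (induction h)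
  case (pCons a h)
  show ?case
  proof (cases "p = 0 \<or> h = 0")
    case True
    thus ?thesis using p by (auto simp: ip_smult ip_smult_right)
  next
    case False
    hence "degree (p * h) < degree (p * pCons a h)"
      by (simp add: degree_mult_eq del: mult_pCons_right)
    hence deg: "degree (p * h) < n" using pCons.prems by simp
    hence "ip (X * (p * h)) (X * (p * h)) = 0"
      using pCons.IH shift_isometric[OF deg deg] by simp
    moreover have "ip (smult a p) (smult a p) = 0"
      using p by (simp add: ip_smult ip_smult_right)
    moreover have "p * pCons a h = smult a p + X * (p * h)" by simp
    ultimately show ?thesis by (metis ip_null_add)
  qed
qed simp

lemma moment_mod_null:
  assumes p: "ip p p = 0" "p \<noteq> 0" "degree p \<le> n" and j: "j \<le> n"
  shows "ip (monom 1 j) 1 = ip (monom 1 j mod p) 1"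
proof -
  define x where "x = (monom 1 j :: complex poly)"
  have "degree (x mod p) \<le> n" using degree_mod_less[OF p(2), of x] p(3) by auto
  moreover have "degree x \<le> n" using j by (simp add: x_def degree_monom_eq)
  ultimately have "degree (x - x mod p) \<le> n"
    by (intro degree_diff_le)
  hence "degree (p * (x div p)) \<le> n"
    by (simp add: minus_mod_eq_mult_div)
  hence "ip (p * (x div p)) 1 = 0"
    by (rule ip_null_left[OF ip_null_mult[OF p(1)]])
  moreover have "x = p * (x div p) + x mod p" by simp
  ultimately have "ip x 1 = ip (x mod p) 1" by (metis add_0 ip_add)
  thus ?thesis by (simp add: x_def)
qed

text \<open>A null monic polynomial \<open>p\<close> of least degree makes the form definite below \<open>deg p\<close>,
  and the shift is unitary modulo \<open>p\<close> since \<open>p\<close> is orthogonal to everything.\<close>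

lemma circle_quadrature_if_null_monic:
  assumes q: "lead_coeff q = 1" "degree q \<le> n" "ip q q = 0"
  shows "circle_quadrature n"
proof -
  define P where "P k \<longleftrightarrow> (\<exists>q. lead_coeff q = 1 \<and> degree q = k \<and> ip q q = 0)" for k
  have Pq: "P (degree q)" unfolding P_def using q by blast
  hence "P (LEAST k. P k)" by (rule LeastI)
  then obtain p where p: "lead_coeff p = 1" "degree p = (LEAST k. P k)" "ip p p = 0"
    unfolding P_def by blast
  have "degree p \<le> degree q"
    unfolding p(2) using Pq by (rule Least_le)
  hence deg_p: "degree p \<le> n" using q(2) by simp
  have definite: "ip f f \<noteq> 0" if f: "f \<noteq> 0" "degree f < degree p" for f
  proof
    assume "ip f f = 0"
    hence "P (degree f)"
      unfolding P_def using f
      by (intro exI[of _ "smult (inverse (lead_coeff f)) f"]) (simp add: ip_smult ip_smult_right)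
    hence "degree p \<le> degree f" unfolding p(2) by (rule Least_le)
    thus False using f(2) by simp
  qed
  have unitary: "ip ((X * f) mod p) ((X * g) mod p) = ip f g"
    if "degree f < degree p" "degree g < degree p" for f g
  proof -
    have "ip ((X * f) mod p) ((X * g) mod p) = ip (X * f) (X * g)"
      unfolding mod_monic_shift[OF p(1) that(1)] mod_monic_shift[OF p(1) that(2)]
      by (simp add: ip_diff ip_diff_right ip_smult ip_smult_right ip_null_left[OF p(3)]
                    ip_null_right[OF p(3)])
    also have "\<dots> = ip f g" using that deg_p by (intro shift_isometric) auto
    finally show ?thesis .
  qed
  have "p \<noteq> 0" using p(1) by auto
  hence "ip (monom 1 j) 1 = ip (monom 1 j mod p) 1" if "j \<le> n" for j
    using moment_mod_null[OF p(3) _ deg_p that] by blast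
  thus ?thesis
    using circle_quadrature_of_unitary_quotient[OF p(1) _ definite unitary] deg_p by simp
qed

end

context shift_isometric
begin

lemma exists_orthogonal_to_shift:
  "\<exists>v. coeff v 0 = 1 \<and> degree v \<le> n \<and> (\<forall>g\<in>span_upto (monom 1) n. ip v (X * g) = 0)"
proof -
  obtain b where b: "b \<in> span_upto (\<lambda>i. monom 1 (Suc i)) n"
    "\<forall>g\<in>span_upto (\<lambda>i. monom 1 (Suc i)) n. ip (1 - b) g = 0"
    using exists_orthogonal_projection by blast
  obtain b' where b': "b' \<in> span_upto (monom 1) n" "b = X * b'"
    using b(1) in_span_upto_shifted_monom_iff by blast
  have "degree (1 - b) \<le> n"
    using b'(1) degree_mult_le[of X b'] unfolding b'(2) in_span_upto_monom_iff_degree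
    by (auto intro: degree_diff_le)
  moreover have "ip (1 - b) (X * g) = 0" if "g \<in> span_upto (monom 1) n" for g
    using b(2) that in_span_upto_shifted_monom_iff by auto
  ultimately show ?thesis
    by (intro exI[of _ "1 - b"]) (simp add: b'(2))
qed

text \<open>On a definite form the shift extends isometrically from \<open>\<complex>\<^sub>n\<^sub>-\<^sub>1[z]\<close> to \<open>\<complex>\<^sub>n[z]\<close>:
  \<open>r\<close> takes the role of \<open>z \<cdot> z\<^sup>n\<close>. With \<open>a\<close> the projection of \<open>z\<^sup>n\<close> to \<open>\<complex>\<^sub>n\<^sub>-\<^sub>1[z]\<close> and
  \<open>v \<perp> z \<complex>\<^sub>n\<^sub>-\<^sub>1[z]\<close>, take \<open>r = z a + t v\<close> with \<open>t \<ge> 0\<close> fixing the norm.\<close>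

lemma exists_isometric_extension:
  assumes definite: "\<And>f. f \<noteq> 0 \<Longrightarrow> degree f \<le> n \<Longrightarrow> ip f f \<noteq> 0"
  shows "\<exists>r. degree r \<le> n \<and> (\<forall>g\<in>span_upto (monom 1) n. ip r (X * g) = ip (monom 1 n) g) \<and>
             ip r r = ip (monom 1 n) (monom 1 n)"
proof -
  define W where "W = (monom 1 n :: complex poly)"
  obtain a where a: "a \<in> span_upto (monom 1) n" "\<forall>g\<in>span_upto (monom 1) n. ip (W - a) g = 0"
    using exists_orthogonal_projection by blast
  obtain v where v: "coeff v 0 = 1" "degree v \<le> n" "\<forall>g\<in>span_upto (monom 1) n. ip v (X * g) = 0"
    using exists_orthogonal_to_shift by blast
  have "v \<noteq> 0" using v(1) by auto
  hence "ip v v \<noteq> 0" using v(2) by (rule definite)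
  hence "Re (ip v v) \<noteq> 0" using ip_self_real[of v] by (metis of_real_0)
  hence vv: "Re (ip v v) > 0" using ip_self_nonneg[of v] by linarith
  have "snorm a \<le> snorm W" using a by (intro snorm_le_if_orthogonal_diff) blast
  hence aW: "Re (ip a a) \<le> Re (ip W W)" by (simp add: snorm_le_iff)
  define t where "t = sqrt ((Re (ip W W) - Re (ip a a)) / Re (ip v v))"
  have t: "t * t * Re (ip v v) = Re (ip W W) - Re (ip a a)"
    using aW vv unfolding t_def by simp
  define r where "r = X * a + smult (of_real t) v"
  have "degree (X * a) \<le> n"
    using a(1) degree_mult_le[of X a] unfolding in_span_upto_monom_iff_degree by auto
  hence "degree r \<le> n"
    unfolding r_def using v(2) degree_smult_le[of "of_real t" v] by (intro degree_add_le) auto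
  moreover have "ip r (X * g) = ip W g" if g: "g \<in> span_upto (monom 1) n" for g
  proof -
    have "ip r (X * g) = ip (X * a) (X * g) + of_real t * ip v (X * g)"
      unfolding r_def by (simp add: ip_add ip_smult)
    also have "\<dots> = ip a g" using shift_isometric_span[OF a(1) g] v(3) g by simp
    also have "\<dots> = ip W g" using a(2) g by (simp add: ip_diff)
    finally show ?thesis .
  qed
  moreover have "ip r r = ip W W"
  proof -
    have va: "ip v (X * a) = 0" using v(3) a(1) by blast
    hence av: "ip (X * a) v = 0" using ip_commute_cnj[of v "X * a"] by simp
    have "ip r r = ip (X * a) (X * a) + of_real (t * t) * ip v v"
      unfolding r_def using va av by (simp add: ip_add ip_add_right ip_smult ip_smult_right)
    also have "\<dots> = of_real (Re (ip a a) + t * t * Re (ip v v))"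
      using shift_isometric_span[OF a(1) a(1)] ip_self_real[of a] ip_self_real[of v] by simp
    also have "\<dots> = ip W W" using t ip_self_real[of W] by simp
    finally show ?thesis .
  qed
  ultimately show ?thesis unfolding W_def by blast
qed

lemma shift_unitary_mod_monom_minus:
  assumes r: "degree r \<le> n" "\<forall>g\<in>span_upto (monom 1) n. ip r (X * g) = ip (monom 1 n) g"
      "ip r r = ip (monom 1 n) (monom 1 n)"
    and fg: "degree f \<le> n" "degree g \<le> n"
  shows "ip ((X * f) mod (monom 1 (Suc n) - r)) ((X * g) mod (monom 1 (Suc n) - r)) = ip f g"
proof -
  define W where "W = (monom 1 n :: complex poly)"
  define f' where "f' = f - smult (coeff f n) W"
  define g' where "g' = g - smult (coeff g n) W"
  have span: "f' \<in> span_upto (monom 1) n" "g' \<in> span_upto (monom 1) n"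
    using fg unfolding in_span_upto_monom_iff f'_def g'_def W_def
    by (auto simp: coeff_eq_0 le_less)
  have f'r: "ip (X * f') r = ip f' W"
    using r(2) span(1) ip_commute_cnj[of r "X * f'"] ip_commute_cnj[of W f'] by (simp add: W_def)
  have "ip ((X * f) mod (monom 1 (Suc n) - r)) ((X * g) mod (monom 1 (Suc n) - r))
        = ip (X * f' + smult (coeff f n) r) (X * g' + smult (coeff g n) r)"
    unfolding f'_def g'_def W_def using fg by (simp only: mod_shift_monom_minus[OF r(1)])
  also have "\<dots> = ip (X * f') (X * g') + cnj (coeff g n) * ip (X * f') r
                  + coeff f n * ip r (X * g') + coeff f n * cnj (coeff g n) * ip r r"
    by (simp add: ip_add ip_add_right ip_smult ip_smult_right algebra_simps)
  also have "\<dots> = ip f' g' + cnj (coeff g n) * ip f' W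
                  + coeff f n * ip W g' + coeff f n * cnj (coeff g n) * ip W W"
    using shift_isometric_span[OF span] r(2,3) span(2) f'r by (simp add: W_def)
  also have "\<dots> = ip (f' + smult (coeff f n) W) (g' + smult (coeff g n) W)"
    by (simp add: ip_add ip_add_right ip_smult ip_smult_right algebra_simps)
  also have "\<dots> = ip f g" by (simp add: f'_def g'_def)
  finally show ?thesis .
qed

lemma circle_quadrature_if_definite:
  assumes definite: "\<And>f. f \<noteq> 0 \<Longrightarrow> degree f \<le> n \<Longrightarrow> ip f f \<noteq> 0"
  shows "circle_quadrature n"
proof -
  obtain r where r: "degree r \<le> n" "\<forall>g\<in>span_upto (monom 1) n. ip r (X * g) = ip (monom 1 n) g"
      "ip r r = ip (monom 1 n) (monom 1 n)"
    using exists_isometric_extension[OF definite] by blast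
  define p where "p = monom 1 (Suc n) - r"
  have deg_p: "degree p = Suc n" unfolding p_def by (rule degree_monom_minus[OF r(1)])
  have monic: "lead_coeff p = 1"
    unfolding deg_p using r(1) by (simp add: p_def coeff_eq_0)
  have "ip ((X * f) mod p) ((X * g) mod p) = ip f g"
    if "degree f < degree p" "degree g < degree p" for f g
    using that deg_p unfolding p_def by (intro shift_unitary_mod_monom_minus[OF r]) auto
  moreover have "ip (monom 1 j) 1 = ip (monom 1 j mod p) 1" if "j \<le> n" for j
    using that deg_p by (simp add: mod_poly_less degree_monom_eq)
  moreover have "ip f f \<noteq> 0" if "f \<noteq> 0" "degree f < degree p" for f
    using that deg_p by (intro definite) auto
  ultimately show ?thesis
    using circle_quadrature_of_unitary_quotient[OF monic] deg_p by simp
qed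

theorem circle_quadrature_of_shift_isometric:
  "circle_quadrature n"
proof (cases "\<exists>q. lead_coeff q = 1 \<and> degree q \<le> n \<and> ip q q = 0")
  case True
  thus ?thesis using circle_quadrature_if_null_monic by blast
next
  case False
  have "ip f f \<noteq> 0" if "f \<noteq> 0" "degree f \<le> n" for f
  proof
    assume "ip f f = 0"
    define g where "g = smult (inverse (lead_coeff f)) f"
    have "lead_coeff g = 1" "degree g \<le> n" using that by (simp_all add: g_def)
    moreover have "ip g g = 0" using \<open>ip f f = 0\<close> by (simp add: g_def ip_smult ip_smult_right)
    ultimately show False using False by blast
  qed
  thus ?thesis by (rule circle_quadrature_if_definite)
qed

end

section \<open>The semi-inner product induced by \<open>L\<close>\<close>

lemma poly_cutoff_Suc_eq_self: "degree f \<le> n \<Longrightarrow> poly_cutoff (Suc n) f = f"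
  by (rule poly_eqI) (auto simp: coeff_poly_cutoff coeff_eq_0)

lemma degree_poly_cutoff_Suc: "degree (poly_cutoff (Suc n) f) \<le> n"
  by (rule degree_le) (simp add: coeff_poly_cutoff)

lemma poly_cutoff_add: "poly_cutoff n (f + g) = poly_cutoff n f + poly_cutoff n g"
  by (rule poly_eqI) (simp add: coeff_poly_cutoff)

lemma poly_cutoff_smult: "poly_cutoff n (smult a f) = smult a (poly_cutoff n f)"
  by (rule poly_eqI) (simp add: coeff_poly_cutoff)

locale hermitian_functional =
  fixes d :: nat and L :: "zpoly \<Rightarrow> complex"
  assumes lin: "lin_functional_on (tot_deg_le (2 * d + 2)) L"
    and real: "real_functional_on (tot_deg_le (2 * d + 2)) L"
    and pos: "\<And>f. degree f \<le> d + 1 \<Longrightarrow> L (herm f f) \<in> \<real> \<and> 0 \<le> Re (L (herm f f))"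
    and welldef: "\<And>p. degree p \<le> d \<Longrightarrow> L (herm p p) = 0 \<Longrightarrow>
                     L (herm ([:0, 1:] * p) ([:0, 1:] * p)) = 0"
begin

lemma L_add:
  "c \<in> tot_deg_le (2 * d + 2) \<Longrightarrow> c' \<in> tot_deg_le (2 * d + 2) \<Longrightarrow>
   L (\<lambda>j k. c j k + c' j k) = L c + L c'"
  using lin unfolding lin_functional_on_def by blast

lemma L_smult: "c \<in> tot_deg_le (2 * d + 2) \<Longrightarrow> L (\<lambda>j k. a * c j k) = a * L c"
  using lin unfolding lin_functional_on_def by blast

lemma L_zero: "L (\<lambda>_ _. 0) = 0"
  using L_smult[of "\<lambda>_ _. 0" 0] by (simp add: tot_deg_le_def)

lemma L_sum:
  "finite A \<Longrightarrow> (\<And>x. x \<in> A \<Longrightarrow> F x \<in> tot_deg_le (2 * d + 2)) \<Longrightarrow>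
   L (\<lambda>j k. \<Sum>x\<in>A. F x j k) = (\<Sum>x\<in>A. L (F x))"
proof (induction A rule: finite_induct)
  case empty
  show ?case by (simp add: L_zero)
next
  case (insert x A)
  have "(\<lambda>j k. \<Sum>x\<in>A. F x j k) \<in> tot_deg_le (2 * d + 2)"
    using insert.prems unfolding tot_deg_le_def by auto
  thus ?case
    using insert L_add[of "F x" "\<lambda>j k. \<Sum>y\<in>A. F y j k"] by simp
qed

lemma herm_in_tot_deg_le:
  assumes "degree f \<le> d + 1" "degree g \<le> d + 1"
  shows "herm f g \<in> tot_deg_le (2 * d + 2)"
proof -
  have "coeff f j * cnj (coeff g k) = 0" if "2 * d + 2 < j + k" for j k
    using assms that by (cases "d + 1 < j") (auto simp: coeff_eq_0)
  thus ?thesis unfolding tot_deg_le_def herm_def by blast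
qed

text \<open>Truncating to degree \<open>d + 1\<close> extends \<open>(f, g) \<mapsto> L(f \<cdot> cnj g)\<close> to a semi-inner product on all
  of \<open>\<complex>[z]\<close>.\<close>

definition Lip :: "complex poly \<Rightarrow> complex poly \<Rightarrow> complex" where
  "Lip f g = L (herm (poly_cutoff (d + 2) f) (poly_cutoff (d + 2) g))"

lemma Lip_eq_L_herm: "degree f \<le> d + 1 \<Longrightarrow> degree g \<le> d + 1 \<Longrightarrow> Lip f g = L (herm f g)"
  by (simp add: Lip_def poly_cutoff_Suc_eq_self)

sublocale poly_semi_inner Lip
proof
  fix f g h :: "complex poly" and a :: complex
  let ?c = "poly_cutoff (d + 2)"
  have deg: "degree (?c f) \<le> d + 1" for f
    using degree_poly_cutoff_Suc[of "d + 1" f] by simp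
  have "herm (?c (f + g)) (?c h) = (\<lambda>j k. herm (?c f) (?c h) j k + herm (?c g) (?c h) j k)"
    by (simp add: herm_def poly_cutoff_add algebra_simps)
  thus "Lip (f + g) h = Lip f h + Lip g h"
    unfolding Lip_def
    using L_add[OF herm_in_tot_deg_le[OF deg deg] herm_in_tot_deg_le[OF deg deg]] by simp
  have "herm (?c (smult a f)) (?c g) = (\<lambda>j k. a * herm (?c f) (?c g) j k)"
    by (simp add: herm_def poly_cutoff_smult mult.assoc)
  thus "Lip (smult a f) g = a * Lip f g"
    unfolding Lip_def using L_smult[OF herm_in_tot_deg_le[OF deg deg]] by simp
  have "herm (?c g) (?c f) = zp_conj (herm (?c f) (?c g))"
    by (simp add: herm_def zp_conj_def fun_eq_iff mult.commute)
  thus "Lip g f = cnj (Lip f g)"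
    unfolding Lip_def using real herm_in_tot_deg_le[OF deg deg]
    unfolding real_functional_on_def by simp
  show "0 \<le> Re (Lip f f)"
    unfolding Lip_def using pos[OF deg] by simp
qed

lemma Lnorm_eq_snorm: "degree p \<le> d + 1 \<Longrightarrow> Lnorm L p = snorm p"
  unfolding Lnorm_def snorm_def by (simp add: Lip_eq_L_herm)

lemma Lip_null_shift: "degree y \<le> d \<Longrightarrow> Lip y y = 0 \<Longrightarrow> Lip (X * y) (X * y) = 0"
  using welldef[of y] degree_mult_le[of X y] by (simp add: Lip_eq_L_herm)

lemma shift_bounded: "\<exists>C\<ge>0. \<forall>y. degree y \<le> d \<longrightarrow> snorm (X * y) \<le> C * snorm y"
proof -
  have "\<exists>C\<ge>0. \<forall>y\<in>span_upto (monom 1) (Suc d). snorm (X * y) \<le> C * snorm y"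
    using Lip_null_shift
    by (intro bounded_on_span_upto) (auto simp: algebra_simps in_span_upto_monom_iff_degree)
  thus ?thesis by (auto simp: in_span_upto_monom_iff_degree)
qed

lemma snorm_proj_rep_le:
  assumes "proj_rep L d x q" "degree x \<le> d + 1"
  shows "snorm q \<le> snorm x"
proof -
  have dq: "degree q \<le> d" using assms(1) unfolding proj_rep_def by blast
  hence "degree (x - q) \<le> d + 1" using assms(2) by (intro degree_diff_le) auto
  hence "Lip (x - q) q = 0"
    using assms(1) dq unfolding proj_rep_def by (simp add: Lip_eq_L_herm)
  thus ?thesis by (rule snorm_le_if_orthogonal_diff)
qed

definition compression_norms :: "real set" where
  "compression_norms = {Lnorm L q | p q. degree p \<le> d \<and> Lnorm L p \<le> 1 \<and> proj_rep L d (X * p) q}"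

lemma Md_norm_eq_Sup: "Md_norm L d = Sup compression_norms"
  unfolding Md_norm_def compression_norms_def ..

lemma bdd_above_compression_norms: "bdd_above compression_norms"
proof -
  obtain C where C: "C \<ge> 0" "\<And>y. degree y \<le> d \<Longrightarrow> snorm (X * y) \<le> C * snorm y"
    using shift_bounded by blast
  have "x \<le> C" if x: "x \<in> compression_norms" for x
  proof -
    obtain p q where pq: "x = Lnorm L q" "degree p \<le> d" "Lnorm L p \<le> 1" "proj_rep L d (X * p) q"
      using x unfolding compression_norms_def by blast
    have dq: "degree q \<le> d" using pq(4) unfolding proj_rep_def by blast
    have "degree (X * p) \<le> d + 1" using pq(2) degree_mult_le[of X p] by simp
    hence "snorm q \<le> snorm (X * p)" using pq(4) by (intro snorm_proj_rep_le)
    also have "\<dots> \<le> C * snorm p" using C(2) pq(2) .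
    also have "\<dots> \<le> C" using pq(2,3) C(1) by (simp add: Lnorm_eq_snorm mult_left_le)
    finally show ?thesis using pq(1) dq by (simp add: Lnorm_eq_snorm)
  qed
  thus ?thesis unfolding bdd_above_def by blast
qed

lemma snorm_shift_le_Md_norm:
  assumes "y \<in> span_upto (monom 1) d"
  shows "snorm (X * y) \<le> Md_norm L d * snorm y"
proof (cases "snorm y = 0")
  case True
  have "degree y \<le> d" using assms by (auto simp: in_span_upto_monom_iff_degree)
  hence "snorm (X * y) = 0" using True Lip_null_shift by (simp add: snorm_eq_0_iff)
  thus ?thesis using True by simp
next
  case False
  hence ny: "snorm y > 0" using snorm_nonneg[of y] by simp
  define p where "p = smult (of_real (1 / snorm y)) y"
  have Xp: "X * p = smult (of_real (1 / snorm y)) (X * y)" unfolding p_def by simp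
  have "degree y \<le> d" "degree (X * y) \<le> d"
    using assms degree_mult_le[of X y] by (auto simp: in_span_upto_monom_iff_degree)
  hence deg: "degree p \<le> d" "degree (X * p) \<le> d"
    unfolding Xp by (auto simp: p_def)
  have "snorm p = 1" unfolding p_def using ny by (simp add: snorm_smult norm_divide)
  moreover have "proj_rep L d (X * p) (X * p)"
    unfolding proj_rep_def using deg(2) by (simp add: herm_def L_zero)
  ultimately have "Lnorm L (X * p) \<in> compression_norms"
    unfolding compression_norms_def using deg Lnorm_eq_snorm by fastforce
  hence "snorm (X * p) \<le> Md_norm L d"
    unfolding Md_norm_eq_Sup using bdd_above_compression_norms deg(2)
    by (metis Lnorm_eq_snorm cSup_upper le_add1 order.trans)
  hence "snorm (X * y) / snorm y \<le> Md_norm L d"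
    using ny unfolding Xp by (simp only: snorm_smult) (simp add: norm_divide)
  thus ?thesis
    using ny by (simp add: field_simps)
qed

lemma Md_norm_nonneg: "0 \<le> Md_norm L d"
proof -
  have "proj_rep L d (X * 0) 0" unfolding proj_rep_def by (simp add: herm_def L_zero)
  hence "Lnorm L 0 \<in> compression_norms"
    unfolding compression_norms_def
    by (intro CollectI exI[of _ 0]) (simp add: Lnorm_def herm_def L_zero)
  hence "Lnorm L 0 \<le> Md_norm L d"
    unfolding Md_norm_eq_Sup using bdd_above_compression_norms by (rule cSup_upper)
  thus ?thesis by (simp add: Lnorm_def herm_def L_zero)
qed

end

section \<open>The rescaled moments form a positive Toeplitz matrix\<close>

locale hermitian_functional_Md_pos = hermitian_functional +
  assumes Md_norm_pos: "Md_norm L d > 0"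
begin

abbreviation R :: real where "R \<equiv> Md_norm L d"

definition scaled_moment :: "nat \<Rightarrow> complex" where
  "scaled_moment j = Lip (monom 1 j) 1 / of_real (R ^ j)"

definition toeplitz_entry :: "nat \<Rightarrow> nat \<Rightarrow> complex" where
  "toeplitz_entry i j = (if j \<le> i then scaled_moment (i - j) else cnj (scaled_moment (j - i)))"

definition zeta :: "complex poly" where
  "zeta = smult (of_real (1 / R)) X"

lemma scaled_moment_0: "scaled_moment 0 = Lip 1 1"
  by (simp add: scaled_moment_def)

lemma cnj_toeplitz_entry: "cnj (toeplitz_entry i j) = toeplitz_entry j i"
  using ip_commute_cnj[of 1 1] by (auto simp: toeplitz_entry_def scaled_moment_0)

lemma zeta_power: "zeta ^ m = smult (of_real ((1 / R) ^ m)) (monom 1 m)"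
  unfolding zeta_def smult_power by (simp add: monom_altdef)

lemma degree_zeta_power: "degree (zeta ^ m) \<le> m"
  unfolding zeta_power using degree_smult_le degree_monom_le order.trans by blast

lemma Lip_zeta_power: "Lip (zeta ^ m) 1 = scaled_moment m"
  unfolding zeta_power ip_smult scaled_moment_def by (simp add: power_divide field_simps)

lemma snorm_zeta_mult_le:
  assumes "y \<in> span_upto (monom 1) d"
  shows "snorm (zeta * y) \<le> snorm y"
proof -
  have "zeta * y = smult (of_real (1 / R)) (X * y)"
    unfolding zeta_def by (rule mult_smult_left)
  hence "snorm (zeta * y) = snorm (X * y) / R"
    using Md_norm_pos by (simp only: snorm_smult) (simp add: norm_divide)
  also have "\<dots> \<le> R * snorm y / R"
    using snorm_shift_le_Md_norm[OF assms] Md_norm_pos by (intro divide_right_mono) auto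
  also have "\<dots> = snorm y"
    using Md_norm_pos by simp
  finally show ?thesis .
qed

context
  fixes a :: "nat \<Rightarrow> complex"
begin

text \<open>Since \<open>horner (k + 1) = \<zeta> \<cdot> horner k + cnj (a (k + 1))\<close>, the quadratic form
  \<open>\<Sum>\<^sub>i\<^sub>,\<^sub>j a\<^sub>i cnj a\<^sub>j T\<^sub>i\<^sub>j\<close> telescopes into \<open>\<parallel>horner k\<parallel>\<^sup>2\<close> plus the defects
  \<open>\<parallel>horner l\<parallel>\<^sup>2 - \<parallel>\<zeta> \<cdot> horner l\<parallel>\<^sup>2\<close>, which are nonnegative because \<open>M\<^sub>d / R\<close> is a contraction.\<close>

definition horner :: "nat \<Rightarrow> complex poly" where
  "horner k = (\<Sum>j\<le>k. smult (cnj (a j)) (zeta ^ (k - j)))"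

definition toeplitz_form :: "nat \<Rightarrow> complex" where
  "toeplitz_form k = (\<Sum>i\<le>k. \<Sum>j\<le>k. a i * cnj (a j) * toeplitz_entry i j)"

lemma zeta_mult_horner: "zeta * horner k = (\<Sum>j\<le>k. smult (cnj (a j)) (zeta ^ (Suc k - j)))"
  unfolding horner_def sum_distrib_left
  by (intro sum.cong refl) (simp add: Suc_diff_le mult_smult_right)

lemma horner_Suc: "horner (Suc k) = zeta * horner k + smult (cnj (a (Suc k))) 1"
  unfolding zeta_mult_horner by (simp add: horner_def)

lemma degree_horner: "degree (horner k) \<le> k"
  unfolding horner_def
  by (intro degree_sum_le) (auto intro: order.trans[OF degree_smult_le] order.trans[OF degree_zeta_power])

lemma Lip_zeta_mult_horner:
  "Lip (zeta * horner k) 1 = (\<Sum>j\<le>k. cnj (a j) * scaled_moment (Suc k - j))"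
  unfolding zeta_mult_horner ip_sum ip_smult by (simp add: Lip_zeta_power)

lemma toeplitz_form_Suc:
  "toeplitz_form (Suc k) = toeplitz_form k
     + a (Suc k) * (\<Sum>j\<le>k. cnj (a j) * scaled_moment (Suc k - j))
     + cnj (a (Suc k)) * cnj (\<Sum>j\<le>k. cnj (a j) * scaled_moment (Suc k - j))
     + a (Suc k) * cnj (a (Suc k)) * scaled_moment 0"
proof -
  have col: "(\<Sum>i\<le>k. a i * cnj (a (Suc k)) * toeplitz_entry i (Suc k))
             = cnj (a (Suc k)) * cnj (\<Sum>j\<le>k. cnj (a j) * scaled_moment (Suc k - j))"
    by (simp add: sum_distrib_left toeplitz_entry_def ac_simps)
  have row: "(\<Sum>j\<le>k. a (Suc k) * cnj (a j) * toeplitz_entry (Suc k) j)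
             = a (Suc k) * (\<Sum>j\<le>k. cnj (a j) * scaled_moment (Suc k - j))"
    by (simp add: sum_distrib_left toeplitz_entry_def ac_simps)
  show ?thesis
    unfolding toeplitz_form_def sum.atMost_Suc sum.distrib col row
    by (simp add: toeplitz_entry_def algebra_simps)
qed

lemma Lip_horner_Suc:
  "Lip (horner (Suc k)) (horner (Suc k)) = Lip (zeta * horner k) (zeta * horner k)
     + a (Suc k) * (\<Sum>j\<le>k. cnj (a j) * scaled_moment (Suc k - j))
     + cnj (a (Suc k)) * cnj (\<Sum>j\<le>k. cnj (a j) * scaled_moment (Suc k - j))
     + a (Suc k) * cnj (a (Suc k)) * scaled_moment 0"
proof -
  define u where "u = zeta * horner k"
  define b where "b = cnj (a (Suc k))"
  have "Lip (horner (Suc k)) (horner (Suc k)) = Lip (u + smult b 1) (u + smult b 1)"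
    unfolding horner_Suc u_def b_def ..
  also have "\<dots> = Lip u u + cnj b * Lip u 1 + b * Lip 1 u + b * cnj b * Lip 1 1"
    by (simp only: ip_add ip_add_right ip_smult ip_smult_right) (simp add: algebra_simps)
  also have "Lip 1 u = cnj (Lip u 1)" by (rule ip_commute_cnj)
  finally show ?thesis
    unfolding u_def b_def Lip_zeta_mult_horner scaled_moment_0 by (simp add: algebra_simps)
qed

lemma toeplitz_form_telescope:
  "toeplitz_form k = Lip (horner k) (horner k)
     + (\<Sum>l<k. Lip (horner l) (horner l) - Lip (zeta * horner l) (zeta * horner l))"
proof (induction k)
  case 0
  have "horner 0 = smult (cnj (a 0)) 1" by (simp add: horner_def)
  hence "Lip (horner 0) (horner 0) = a 0 * cnj (a 0) * scaled_moment 0"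
    by (simp only: ip_smult ip_smult_right scaled_moment_0) (simp add: algebra_simps)
  thus ?case by (simp add: toeplitz_form_def toeplitz_entry_def)
next
  case (Suc k)
  thus ?case unfolding toeplitz_form_Suc Lip_horner_Suc by (simp add: algebra_simps)
qed

lemma toeplitz_form_nonneg: "0 \<le> Re (toeplitz_form d)"
proof -
  have "Re (Lip (zeta * horner l) (zeta * horner l)) \<le> Re (Lip (horner l) (horner l))" if "l < d" for l
  proof -
    have "horner l \<in> span_upto (monom 1) d"
      using degree_horner[of l] that unfolding in_span_upto_monom_iff_degree by auto
    hence "snorm (zeta * horner l) \<le> snorm (horner l)" by (rule snorm_zeta_mult_le)
    thus ?thesis by (simp add: snorm_le_iff)
  qed
  hence "0 \<le> (\<Sum>l<d. Re (Lip (horner l) (horner l)) - Re (Lip (zeta * horner l) (zeta * horner l)))"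
    by (intro sum_nonneg) auto
  thus ?thesis
    using toeplitz_form_telescope[of d] ip_self_nonneg[of "horner d"] by simp
qed

end

definition toeplitz_ip :: "complex poly \<Rightarrow> complex poly \<Rightarrow> complex" where
  "toeplitz_ip f g = (\<Sum>i\<le>d. \<Sum>j\<le>d. coeff f i * cnj (coeff g j) * toeplitz_entry i j)"

sublocale toeplitz: shift_isometric toeplitz_ip d
proof
  fix f g h :: "complex poly" and a :: complex
  show "toeplitz_ip (f + g) h = toeplitz_ip f h + toeplitz_ip g h"
    unfolding toeplitz_ip_def by (simp add: sum.distrib algebra_simps)
  show "toeplitz_ip (smult a f) g = a * toeplitz_ip f g"
    unfolding toeplitz_ip_def by (simp add: sum_distrib_left algebra_simps)
  have "cnj (toeplitz_ip f g) = (\<Sum>i\<le>d. \<Sum>j\<le>d. coeff g j * cnj (coeff f i) * toeplitz_entry j i)"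
    unfolding toeplitz_ip_def
    by (simp add: cnj_toeplitz_entry mult.commute mult.left_commute)
  also have "\<dots> = toeplitz_ip g f"
    unfolding toeplitz_ip_def by (rule sum.swap)
  finally show "toeplitz_ip g f = cnj (toeplitz_ip f g)" by simp
  show "0 \<le> Re (toeplitz_ip f f)"
    using toeplitz_form_nonneg[of "coeff f"] unfolding toeplitz_ip_def toeplitz_form_def .
next
  fix f g :: "complex poly"
  assume f: "degree f < d" and g: "degree g < d"
  then obtain d' where d': "d = Suc d'" by (cases d) auto
  have D: "{..d} = {..Suc d'}" using d' by simp
  have "coeff f d = 0" "coeff g d = 0" using f g by (simp_all add: coeff_eq_0)
  hence "toeplitz_ip f g = (\<Sum>i\<le>d'. \<Sum>j\<le>d'. coeff f i * cnj (coeff g j) * toeplitz_entry i j)"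
    unfolding toeplitz_ip_def D using d' by simp
  moreover have "toeplitz_entry (Suc i) (Suc j) = toeplitz_entry i j" for i j
    by (simp add: toeplitz_entry_def)
  ultimately show "toeplitz_ip (X * f) (X * g) = toeplitz_ip f g"
    unfolding toeplitz_ip_def D sum.atMost_Suc_shift by (simp del: sum.atMost_Suc)
qed

lemma toeplitz_ip_monom_1:
  assumes "j \<le> d"
  shows "toeplitz_ip (monom 1 j) 1 = scaled_moment j"
proof -
  have "(\<Sum>k\<le>d. coeff (monom 1 j) i * cnj (coeff 1 k) * toeplitz_entry i k)
        = coeff (monom 1 j) i * toeplitz_entry i 0" for i
    by (subst sum.atMost_shift) simp
  hence "toeplitz_ip (monom 1 j) 1 = (\<Sum>i\<le>d. coeff (monom 1 j) i * toeplitz_entry i 0)"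
    unfolding toeplitz_ip_def by simp
  also have "\<dots> = (\<Sum>i\<le>d. if i = j then toeplitz_entry j 0 else 0)"
    by (intro sum.cong refl) auto
  also have "\<dots> = scaled_moment j"
    using assms by (simp add: toeplitz_entry_def)
  finally show ?thesis .
qed

end

section \<open>Quadrature for the moments and for harmonic polynomials\<close>

context hermitian_functional
begin

definition moment_quadrature :: "nat \<Rightarrow> (nat \<Rightarrow> complex) \<Rightarrow> (nat \<Rightarrow> real) \<Rightarrow> bool" where
  "moment_quadrature N zs c \<longleftrightarrow> N \<le> d + 1 \<and> (\<forall>k<N. cmod (zs k) = Md_norm L d \<and> c k > 0) \<and>
     (\<forall>j\<le>d. Lip (monom 1 j) 1 = (\<Sum>k<N. of_real (c k) * zs k ^ j))"

text \<open>For \<open>\<parallel>M\<^sub>d\<parallel> = 0\<close> all moments \<open>L(z\<^sup>j)\<close>, \<open>j \<ge> 1\<close>, vanish and a single node at \<open>0\<close> suffices.\<close>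

lemma exists_moment_quadrature_Md_norm_0:
  assumes R0: "Md_norm L d = 0"
  shows "\<exists>N zs c. moment_quadrature N zs c"
proof -
  have null: "Lip (monom 1 j) 1 = 0" if j: "1 \<le> j" "j \<le> d" for j
  proof -
    have "monom 1 (j - 1) \<in> span_upto (monom 1) d"
      using j by (simp add: in_span_upto_monom_iff_degree degree_monom_eq)
    hence "snorm (X * monom 1 (j - 1)) \<le> 0"
      using snorm_shift_le_Md_norm[of "monom 1 (j - 1)"] R0 by simp
    moreover have "X * monom 1 (j - 1) = monom 1 j"
      using j by (cases j) (auto simp: monom_Suc)
    ultimately have "snorm (monom 1 j) = 0"
      using snorm_nonneg[of "monom 1 j"] by simp
    hence "Lip (monom 1 j) (monom 1 j) = 0"
      by (simp add: snorm_eq_0_iff)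
    thus ?thesis by (rule ip_null_left)
  qed
  show ?thesis
  proof (cases "Lip 1 1 = 0")
    case True
    hence "moment_quadrature 0 (\<lambda>_. 0) (\<lambda>_. 0)"
      unfolding moment_quadrature_def by (simp add: ip_null_right)
    thus ?thesis by blast
  next
    case False
    define c0 where "c0 = Re (Lip 1 1)"
    have i11: "Lip 1 1 = of_real c0" unfolding c0_def by (rule ip_self_real)
    hence "c0 \<noteq> 0" using False by auto
    hence "c0 > 0" using ip_self_nonneg[of 1] unfolding c0_def by linarith
    moreover have "Lip (monom 1 j) 1 = of_real c0 * 0 ^ j" if "j \<le> d" for j
      using null[of j] that i11 by (cases "j = 0") auto
    ultimately have "moment_quadrature 1 (\<lambda>_. 0) (\<lambda>_. c0)"
      unfolding moment_quadrature_def using R0 by simp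
    thus ?thesis by blast
  qed
qed

end

context hermitian_functional_Md_pos
begin

lemma exists_moment_quadrature_Md_norm_pos: "\<exists>N zs c. moment_quadrature N zs c"
proof -
  obtain N l c where Nlc: "N \<le> d + 1" "\<forall>k<N. cmod (l k) = 1 \<and> (c k :: real) > 0"
     "\<forall>j\<le>d. toeplitz_ip (monom 1 j) 1 = (\<Sum>k<N. of_real (c k) * l k ^ j)"
    using toeplitz.circle_quadrature_of_shift_isometric unfolding toeplitz.circle_quadrature_def by blast
  define zs where "zs k = of_real R * l k" for k
  have "Lip (monom 1 j) 1 = (\<Sum>k<N. of_real (c k) * zs k ^ j)" if j: "j \<le> d" for j
  proof -
    have "Lip (monom 1 j) 1 = of_real (R ^ j) * scaled_moment j"
      using Md_norm_pos by (simp add: scaled_moment_def)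
    also have "\<dots> = of_real (R ^ j) * (\<Sum>k<N. of_real (c k) * l k ^ j)"
      using Nlc(3) j toeplitz_ip_monom_1 by simp
    also have "\<dots> = (\<Sum>k<N. of_real (c k) * zs k ^ j)"
      unfolding sum_distrib_left zs_def by (intro sum.cong refl) (simp add: power_mult_distrib)
    finally show ?thesis .
  qed
  moreover have "\<forall>k<N. cmod (zs k) = R" using Nlc(2) Md_norm_pos by (simp add: zs_def norm_mult)
  ultimately have "moment_quadrature N zs c"
    unfolding moment_quadrature_def using Nlc by simp
  thus ?thesis by blast
qed

end

context hermitian_functional
begin

lemma exists_moment_quadrature: "\<exists>N zs c. moment_quadrature N zs c"
proof (cases "Md_norm L d = 0")
  case True
  thus ?thesis by (rule exists_moment_quadrature_Md_norm_0)
next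
  case False
  hence "Md_norm L d > 0" using Md_norm_nonneg by simp
  then interpret hermitian_functional_Md_pos d L by unfold_locales
  show ?thesis by (rule exists_moment_quadrature_Md_norm_pos)
qed

definition zp_monomial :: "nat \<Rightarrow> nat \<Rightarrow> zpoly" where
  "zp_monomial a b = (\<lambda>j k. if j = a \<and> k = b then 1 else 0)"

lemma zp_monomial_in_tot_deg_le: "a \<le> d \<Longrightarrow> b \<le> d \<Longrightarrow> zp_monomial a b \<in> tot_deg_le (2 * d + 2)"
  unfolding zp_monomial_def tot_deg_le_def by auto

lemma L_zp_monomial_z:
  assumes "j \<le> d"
  shows "L (zp_monomial j 0) = Lip (monom 1 j) 1"
proof -
  have "herm (monom 1 j) 1 = zp_monomial j 0"
    unfolding herm_def zp_monomial_def by (auto simp: fun_eq_iff coeff_1)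
  thus ?thesis using assms by (simp add: Lip_eq_L_herm degree_monom_eq)
qed

lemma L_zp_monomial_zbar:
  assumes "k \<le> d"
  shows "L (zp_monomial 0 k) = cnj (L (zp_monomial k 0))"
proof -
  have "zp_conj (zp_monomial k 0) = zp_monomial 0 k"
    by (auto simp: fun_eq_iff zp_conj_def zp_monomial_def)
  thus ?thesis
    using real zp_monomial_in_tot_deg_le[of k 0] assms unfolding real_functional_on_def by force
qed

lemma harmonic_mixed_coeff_zero: "harmonic h \<Longrightarrow> 1 \<le> j \<Longrightarrow> 1 \<le> k \<Longrightarrow> h j k = 0"
  unfolding harmonic_def zp_dzdzbar_def
  by (drule fun_cong[of _ _ "j - 1"], drule fun_cong[of _ _ "k - 1"]) simp

lemma bideg_le_expansion:
  assumes "h \<in> bideg_le d d"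
  shows "h = (\<lambda>j k. \<Sum>x\<in>{..d} \<times> {..d}. h (fst x) (snd x) * zp_monomial (fst x) (snd x) j k)"
proof (intro ext)
  fix j k
  have "(\<Sum>x\<in>{..d} \<times> {..d}. h (fst x) (snd x) * zp_monomial (fst x) (snd x) j k)
        = (\<Sum>x\<in>{..d} \<times> {..d}. if x = (j, k) then h j k else 0)"
    unfolding zp_monomial_def by (intro sum.cong refl) auto
  also have "\<dots> = h j k" using assms unfolding bideg_le_def by (auto simp: sum.delta')
  finally show "h j k = (\<Sum>x\<in>{..d} \<times> {..d}. h (fst x) (snd x) * zp_monomial (fst x) (snd x) j k)" ..
qed

text \<open>A harmonic \<open>h\<close> only has coefficients at \<open>z\<^sup>j\<close> and \<open>z\<^sup>k\<close>, where \<open>L\<close> is given by the moments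
  and their conjugates.\<close>

lemma harmonic_coeff_L_zp_monomial:
  assumes quad: "moment_quadrature N zs c" and h: "harmonic h" and jk: "j \<le> d" "k \<le> d"
  shows "h j k * L (zp_monomial j k) = (\<Sum>n<N. of_real (c n) * (h j k * zs n ^ j * cnj (zs n) ^ k))"
proof -
  have mom: "Lip (monom 1 i) 1 = (\<Sum>n<N. of_real (c n) * zs n ^ i)" if "i \<le> d" for i
    using quad that unfolding moment_quadrature_def by blast
  consider "h j k = 0" | "k = 0" | "j = 0"
    using harmonic_mixed_coeff_zero[OF h, of j k] by linarith
  thus ?thesis
  proof cases
    case 2
    thus ?thesis using jk L_zp_monomial_z mom by (simp add: sum_distrib_left algebra_simps)
  next
    case 3
    thus ?thesis using jk L_zp_monomial_zbar L_zp_monomial_z mom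
      by (simp add: sum_distrib_left algebra_simps)
  qed simp
qed

lemma L_harmonic_eq_quadrature:
  assumes quad: "moment_quadrature N zs c" and h: "h \<in> bideg_le d d" "harmonic h"
  shows "L h = (\<Sum>n<N. of_real (c n) * zp_eval d h (zs n))"
proof -
  define A where "A = {..d} \<times> {..d}"
  have "L h = L (\<lambda>j k. \<Sum>x\<in>A. h (fst x) (snd x) * zp_monomial (fst x) (snd x) j k)"
    unfolding A_def by (rule arg_cong[OF bideg_le_expansion[OF h(1)]])
  also have "\<dots> = (\<Sum>x\<in>A. L (\<lambda>j k. h (fst x) (snd x) * zp_monomial (fst x) (snd x) j k))"
    by (rule L_sum) (auto simp: A_def tot_deg_le_def zp_monomial_def)
  also have "\<dots> = (\<Sum>x\<in>A. h (fst x) (snd x) * L (zp_monomial (fst x) (snd x)))"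
    by (intro sum.cong refl L_smult zp_monomial_in_tot_deg_le) (auto simp: A_def)
  also have "\<dots> = (\<Sum>x\<in>A. \<Sum>n<N. of_real (c n) * (h (fst x) (snd x) * zs n ^ fst x * cnj (zs n) ^ snd x))"
    using harmonic_coeff_L_zp_monomial[OF quad h(2)] by (intro sum.cong refl) (auto simp: A_def)
  also have "\<dots> = (\<Sum>n<N. \<Sum>x\<in>A. of_real (c n) * (h (fst x) (snd x) * zs n ^ fst x * cnj (zs n) ^ snd x))"
    by (rule sum.swap)
  also have "\<dots> = (\<Sum>n<N. of_real (c n) * zp_eval d h (zs n))"
  proof (intro sum.cong refl)
    fix n
    have "zp_eval d h (zs n) = (\<Sum>x\<in>A. h (fst x) (snd x) * zs n ^ fst x * cnj (zs n) ^ snd x)"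
      unfolding zp_eval_def A_def sum.cartesian_product by (simp add: case_prod_beta)
    thus "(\<Sum>x\<in>A. of_real (c n) * (h (fst x) (snd x) * zs n ^ fst x * cnj (zs n) ^ snd x))
          = of_real (c n) * zp_eval d h (zs n)"
      by (simp add: sum_distrib_left)
  qed
  finally show ?thesis .
qed

end

theorem theorem1:
  fixes d :: nat and L :: "zpoly \<Rightarrow> complex"
  assumes lin: "lin_functional_on (tot_deg_le (2 * d + 2)) L"
    and real: "real_functional_on (tot_deg_le (2 * d + 2)) L"
    and pos: "\<And>f. degree f \<le> d + 1 \<Longrightarrow> L (herm f f) \<in> \<real> \<and> 0 \<le> Re (L (herm f f))"
    and welldef: "\<And>p. degree p \<le> d \<Longrightarrow> L (herm p p) = 0 \<Longrightarrow>
                     L (herm ([:0, 1:] * p) ([:0, 1:] * p)) = 0"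
  shows "\<exists>N zs c. N \<le> (d + 1) ^ 2 \<and>
           (\<forall>k<N. cmod (zs k) = Md_norm L d \<and> (c k :: real) > 0) \<and>
           (\<forall>h \<in> bideg_le d d. harmonic h \<longrightarrow>
               L h = (\<Sum>k<N. of_real (c k) * zp_eval d h (zs k)))"
proof -
  interpret hermitian_functional d L
    using assms by unfold_locales
  obtain N zs c where quad: "moment_quadrature N zs c"
    using exists_moment_quadrature by blast
  have "N \<le> (d + 1) ^ 2"
    using quad le_square[of "d + 1"] unfolding moment_quadrature_def power2_eq_square by linarith
  thus ?thesis
    using quad L_harmonic_eq_quadrature unfolding moment_quadrature_def by blast
qed

end
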